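(* Let $\Sigma\subset\mathbb G$ be a regular surface and $\gamma=(\gamma_1,\gamma_2,\gamma_3):[a,b]\to\Sigma$ a Euclidean $C^2$-smooth regular curve, and let $t\in[a,b]$ be such that $\gamma(t)$ is a non-characteristic point of $\Sigma$, with $\bar p,\bar q$ evaluated at $\gamma(t)$. Write $\omega(\dot\gamma(t))=\frac{\dot\gamma_2}{\gamma_1}-\dot\gamma_3$. (i) If $\omega(\dot\gamma(t))\ne0$, then $\lim_{L\to+\infty}k^L_{\gamma,\Sigma}$ exists and equals $\dfrac{|\bar p\dot\gamma_1+\bar q\dot\gamma_2|}{|\gamma_1|\,|\omega(\dot\gamma(t))|}$. (ii) If $\omega(\dot\gamma(t))=0$ and $\frac{d}{dt}\omega(\dot\gamma(t))=0$, then $\lim_{L\to+\infty}k^L_{\gamma,\Sigma}=0$. (iii) If $\omega(\dot\gamma(t))=0$ and $\frac{d}{dt}\omega(\dot\gamma(t))\ne0$, then $$\lim_{L\to+\infty}\frac{k^L_{\gamma,\Sigma}}{\sqrt L}=\frac{\big|\frac{d}{dt}\omega(\dot\gamma(t))\big|}{\big(\bar q\frac{\dot\gamma_1}{\gamma_1}-\bar p\dot\gamma_3\big)^2}.$$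
   Context: $\mathbb G=(0,\infty)\times\mathbb R^2$ is the affine group with coordinates $(x_1,x_2,x_3)$. Let $X_1=x_1\partial_{x_1}$, $X_2=x_1\partial_{x_2}+\partial_{x_3}$, $X_3=x_1\partial_{x_2}$ with dual forms $\omega_1=x_1^{-1}dx_1$, $\omega_2=dx_3$, $\omega=x_1^{-1}dx_2-dx_3$; for $L>0$, $g_L=\omega_1\otimes\omega_1+\omega_2\otimes\omega_2+L\,\omega\otimes\omega$ (so $X_1,X_2,\widetilde X_3:=L^{-1/2}X_3$ is orthonormal) with Levi-Civita connection $\nabla^L$. A regular surface is a Euclidean $C^2$-smooth compact oriented surface $\Sigma=\{u=0\}$ with $u$ Euclidean $C^2$ and nonvanishing Euclidean gradient. Put $p=X_1u$, $q=X_2u$, $l=\sqrt{p^2+q^2}$, $\bar p=p/l$, $\bar q=q/l$; a point is non-characteristic if $l\neq0$. Let $\nabla^{\Sigma,L}_UV$ be the $g_L$-orthogonal projection of $\nabla^L_UV$ onto $T\Sigma$ (the Levi-Civita connection of the induced metric). The geodesic curvature of $\gamma$ is $$k^L_{\gamma,\Sigma}=\sqrt{\frac{\|\nabla^{\Sigma,L}_{\dot\gamma}\dot\gamma\|_L^2}{\|\dot\gamma\|_L^4}-\frac{\langle\nabla^{\Sigma,L}_{\dot\gamma}\dot\gamma,\dot\gamma\rangle_L^2}{\|\dot\gamma\|_L^6}}.$$ *)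

theory Defs
  imports "HOL-Analysis.Analysis"
begin

text \<open>The affine group G = (0,oo) x R^2, points are x :: real^3 with
  coordinates x$1, x$2, x$3.\<close>
definition Gset :: "(real^3) set" where
  "Gset = {x. x$1 > 0}"

definition om1 :: "real^3 \<Rightarrow> real^3 \<Rightarrow> real" where
  "om1 x v = v$1 / x$1"
definition om2 :: "real^3 \<Rightarrow> real^3 \<Rightarrow> real" where
  "om2 x v = v$3"
definition om :: "real^3 \<Rightarrow> real^3 \<Rightarrow> real" where
  "om x v = v$2 / x$1 - v$3"

definition gL :: "real \<Rightarrow> real^3 \<Rightarrow> real^3 \<Rightarrow> real^3 \<Rightarrow> real" where
  "gL L x v w = om1 x v * om1 x w + om2 x v * om2 x w + L * om x v * om x w"

definition gmat :: "real \<Rightarrow> real^3 \<Rightarrow> real^3^3" where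
  "gmat L x = (\<chi> i j. gL L x (axis i 1) (axis j 1))"

definition dg :: "real \<Rightarrow> 3 \<Rightarrow> 3 \<Rightarrow> 3 \<Rightarrow> real^3 \<Rightarrow> real" where
  "dg L l i j x = deriv (\<lambda>s. gL L (x + s *\<^sub>R axis l 1) (axis i 1) (axis j 1)) 0"

definition christoffel :: "real \<Rightarrow> 3 \<Rightarrow> 3 \<Rightarrow> 3 \<Rightarrow> real^3 \<Rightarrow> real" where
  "christoffel L k i j x = (1/2) * (\<Sum>l\<in>UNIV. matrix_inv (gmat L x) $ k $ l *
      (dg L i j l x + dg L j i l x - dg L l i j x))"

text \<open>Covariant acceleration nabla^L_{gamma'} gamma' at a point x of a curve with
  velocity v and (coordinate) second derivative a.\<close>
definition cov_acc :: "real \<Rightarrow> real^3 \<Rightarrow> real^3 \<Rightarrow> real^3 \<Rightarrow> real^3" where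
  "cov_acc L x v a = (\<chi> k. a$k + (\<Sum>i\<in>UNIV. \<Sum>j\<in>UNIV. christoffel L k i j x * v$i * v$j))"

text \<open>g_L-orthogonal projection of w onto the tangent plane {v. n . v = 0}, where n is the
  Euclidean gradient of the defining function u at x.\<close>
definition tproj :: "real \<Rightarrow> real^3 \<Rightarrow> real^3 \<Rightarrow> real^3 \<Rightarrow> real^3" where
  "tproj L n x w = (THE v. n \<bullet> v = 0 \<and> (\<forall>z. n \<bullet> z = 0 \<longrightarrow> gL L x (w - v) z = 0))"

text \<open>Geodesic curvature k^L_{gamma,Sigma} at a point x with velocity v and coordinate
  second derivative a, n being the Euclidean gradient of u at x.\<close>
definition geod_curv :: "real \<Rightarrow> real^3 \<Rightarrow> real^3 \<Rightarrow> real^3 \<Rightarrow> real^3 \<Rightarrow> real" where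
  "geod_curv L n x v a =
     (let N = tproj L n x (cov_acc L x v a); nv = sqrt (gL L x v v)
      in sqrt (gL L x N N / nv ^ 4 - (gL L x N v)\<^sup>2 / nv ^ 6))"

text \<open>p = X_1 u, q = X_2 u, l, pbar, qbar, in terms of the Euclidean gradient n of u at x.\<close>
definition pX :: "real^3 \<Rightarrow> real^3 \<Rightarrow> real" where
  "pX n x = x$1 * n$1"
definition qX :: "real^3 \<Rightarrow> real^3 \<Rightarrow> real" where
  "qX n x = x$1 * n$2 + n$3"
definition lX :: "real^3 \<Rightarrow> real^3 \<Rightarrow> real" where
  "lX n x = sqrt ((pX n x)\<^sup>2 + (qX n x)\<^sup>2)"
definition pbar :: "real^3 \<Rightarrow> real^3 \<Rightarrow> real" where
  "pbar n x = pX n x / lX n x"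
definition qbar :: "real^3 \<Rightarrow> real^3 \<Rightarrow> real" where
  "qbar n x = qX n x / lX n x"

end

theory Submission
  imports Defs
begin

(* In the frame X1, X2, X3 the Christoffel symbols of g_L are explicit, and the covariant
   acceleration of gamma has frame components e1 + L (om2 + om) om, e2 - L om1 om and e3 with
   e1, e2, e3 independent of L (here om1, om2, om are the frame components of gamma').
   The g_L-gradient of u has squared length p^2 + q^2 + r^2 / L with r = X3 u, so the squared
   geodesic curvature is an explicit rational function of L.  When om(gamma') <> 0 the terms of
   order L dominate and survive the normalisation by |gamma'|^4 ~ L^2 om^4; when om(gamma') = 0
   the only growing term is L e3^2 with e3 = d/dt om(gamma'), which gives the sqrt L rate. *)

definition kron :: "3 \<Rightarrow> 3 \<Rightarrow> real" where
  "kron i k = (if i = k then 1 else 0)"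

lemma axis_nth_kron: "axis i (1::real) $ k = kron i k"
  by (simp add: axis_def kron_def)

definition metric_coeff :: "real \<Rightarrow> 3 \<Rightarrow> 3 \<Rightarrow> real \<Rightarrow> real" where
  "metric_coeff L i j s = kron i 1 * kron j 1 / s\<^sup>2 + kron i 3 * kron j 3
     + L * (kron i 2 / s - kron i 3) * (kron j 2 / s - kron j 3)"

definition metric_coeff' :: "real \<Rightarrow> 3 \<Rightarrow> 3 \<Rightarrow> real \<Rightarrow> real" where
  "metric_coeff' L i j s = - 2 * kron i 1 * kron j 1 / s ^ 3
     - L * (kron i 2 * (kron j 2 / s - kron j 3) + (kron i 2 / s - kron i 3) * kron j 2) / s\<^sup>2"

lemma gL_axis: "gL L x (axis i 1) (axis j 1) = metric_coeff L i j (x$1)"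
  by (simp add: gL_def om1_def om2_def om_def axis_nth_kron metric_coeff_def power2_eq_square)

lemma metric_coeff_has_derivative:
  "s \<noteq> 0 \<Longrightarrow> (metric_coeff L i j has_real_derivative metric_coeff' L i j s) (at s)"
  unfolding metric_coeff_def metric_coeff'_def
  by (rule derivative_eq_intros refl | simp)+
     (simp add: field_simps power2_eq_square power3_eq_cube eval_nat_numeral)

lemma dg_eq:
  assumes "x$1 \<noteq> 0"
  shows "dg L l i j x = kron l 1 * metric_coeff' L i j (x$1)"
proof -
  have "((\<lambda>s. metric_coeff L i j (x$1 + s * kron l 1)) has_real_derivative
      metric_coeff' L i j (x$1 + 0 * kron l 1) * kron l 1) (at 0)"
    by (rule DERIV_chain2[OF metric_coeff_has_derivative])
       (use assms in \<open>auto intro!: derivative_eq_intros\<close>)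
  then show ?thesis
    by (simp add: dg_def gL_axis axis_nth_kron DERIV_imp_deriv mult.commute)
qed

lemma matrix_inv_eqI:
  fixes A B :: "'a::semiring_1^'n^'n"
  assumes AB: "A ** B = mat 1" and BA: "B ** A = mat 1"
  shows "matrix_inv A = B"
proof -
  have inv: "matrix_inv A ** A = mat 1"
    unfolding matrix_inv_def by (rule someI2[of _ B]) (use AB BA in auto)
  have "matrix_inv A = matrix_inv A ** (A ** B)"
    by (simp add: AB matrix_mul_rid)
  also have "\<dots> = B"
    by (simp add: matrix_mul_assoc inv matrix_mul_lid)
  finally show ?thesis .
qed

definition inverse_metric :: "real \<Rightarrow> real \<Rightarrow> real^3^3" where
  "inverse_metric L s = (\<chi> k l.
     if k = 1 \<and> l = 1 then s\<^sup>2 else if k = 2 \<and> l = 2 then s\<^sup>2 * (1 + L) / L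
     else if k = 2 \<and> l = 3 \<or> k = 3 \<and> l = 2 then s else if k = 3 \<and> l = 3 then 1 else 0)"

lemma matrix_inv_gmat:
  assumes "x$1 \<noteq> 0" "L \<noteq> 0"
  shows "matrix_inv (gmat L x) = inverse_metric L (x$1)"
proof (rule matrix_inv_eqI)
  have g: "gmat L x = (\<chi> i j. metric_coeff L i j (x$1))"
    by (simp add: gmat_def gL_axis)
  show "gmat L x ** inverse_metric L (x$1) = mat 1" "inverse_metric L (x$1) ** gmat L x = mat 1"
    using assms unfolding g
    by (simp_all add: matrix_matrix_mult_def vec_eq_iff forall_3 sum_3 mat_def metric_coeff_def
        inverse_metric_def kron_def field_simps power2_eq_square)
qed

lemma cov_acc_nth:
  assumes "x$1 \<noteq> 0" "L \<noteq> 0"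
  shows "cov_acc L x v a $ 1 = a$1 + L * v$2 * (v$2 / x$1 - v$3) - (v$1)\<^sup>2 / x$1"
    and "cov_acc L x v a $ 2 = a$2 - 2 * v$1 * v$2 / x$1 + v$1 * v$3 - L * v$1 * (v$2 / x$1 - v$3)"
    and "cov_acc L x v a $ 3 = a$3 - L * v$1 * (v$2 / x$1 - v$3) / x$1"
  using assms
  by (simp_all add: cov_acc_def christoffel_def matrix_inv_gmat dg_eq sum_3 inverse_metric_def
      kron_def metric_coeff'_def) (simp_all add: field_simps power2_eq_square power3_eq_cube)

(* d/dt om(gamma') along a curve with gamma = x, gamma' = v and gamma'' = a *)
definition om_rate :: "real^3 \<Rightarrow> real^3 \<Rightarrow> real^3 \<Rightarrow> real" where
  "om_rate x v a = om x a - om1 x v * v$2 / x$1"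

lemma frame_cov_acc:
  assumes "x$1 \<noteq> 0" "L \<noteq> 0"
  shows "om1 x (cov_acc L x v a) = om1 x a - (om1 x v)\<^sup>2 + L * (om2 x v + om x v) * om x v"
    and "om2 x (cov_acc L x v a) = om2 x a - L * om1 x v * om x v"
    and "om x (cov_acc L x v a) = om_rate x v a - om1 x v * om x v"
  using assms
  by (simp_all add: om1_def om2_def om_def om_rate_def cov_acc_nth field_simps power2_eq_square)

lemma gL_diff_left: "gL L x (v - w) z = gL L x v z - gL L x w z"
  by (simp add: gL_def om1_def om2_def om_def algebra_simps diff_divide_distrib)

lemma gL_scaleR_left: "gL L x (c *\<^sub>R v) z = c * gL L x v z"
  by (simp add: gL_def om1_def om2_def om_def algebra_simps)

lemma gL_commute: "gL L x v w = gL L x w v"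
  by (simp add: gL_def algebra_simps)

lemma gL_diff_right: "gL L x z (v - w) = gL L x z v - gL L x z w"
  by (metis gL_commute gL_diff_left)

lemma gL_scaleR_right: "gL L x z (c *\<^sub>R v) = c * gL L x z v"
  by (metis gL_commute gL_scaleR_left)

lemma gL_self_nonneg: "L \<ge> 0 \<Longrightarrow> gL L x v v \<ge> 0"
  by (simp add: gL_def mult.assoc)

lemma gL_self_eq_0_iff:
  assumes "x$1 \<noteq> 0" "L > 0"
  shows "gL L x v v = 0 \<longleftrightarrow> v = 0"
proof
  assume "gL L x v v = 0"
  then have "(om1 x v)\<^sup>2 + (om2 x v)\<^sup>2 + L * (om x v)\<^sup>2 = 0"
    by (simp add: gL_def power2_eq_square mult.assoc)
  then have "om1 x v = 0" "om2 x v = 0" "om x v = 0"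
    using \<open>L > 0\<close> by (auto simp: add_nonneg_eq_0_iff)
  then show "v = 0"
    using assms(1) by (simp add: om1_def om2_def om_def vec_eq_iff forall_3)
qed (simp add: gL_def om1_def om2_def om_def)

definition rX :: "real^3 \<Rightarrow> real^3 \<Rightarrow> real" where
  "rX n x = x$1 * n$2"

lemma inner_eq_frame:
  "x$1 \<noteq> 0 \<Longrightarrow> n \<bullet> w = pX n x * om1 x w + qX n x * om2 x w + rX n x * om x w"
  by (simp add: inner_vec_def sum_3 pX_def qX_def rX_def om1_def om2_def om_def field_simps)

(* the vector with frame components (p, q, r / L) *)
definition metric_gradient :: "real \<Rightarrow> real^3 \<Rightarrow> real^3 \<Rightarrow> real^3" where
  "metric_gradient L n x = vector [x$1 * pX n x, x$1 * (qX n x + rX n x / L), qX n x]"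

lemma gL_metric_gradient:
  "x$1 \<noteq> 0 \<Longrightarrow> L \<noteq> 0 \<Longrightarrow> gL L x (metric_gradient L n x) z = n \<bullet> z"
  by (simp add: inner_eq_frame metric_gradient_def gL_def om1_def om2_def om_def)

lemma inner_metric_gradient:
  "x$1 \<noteq> 0 \<Longrightarrow> n \<bullet> metric_gradient L n x = (pX n x)\<^sup>2 + (qX n x)\<^sup>2 + (rX n x)\<^sup>2 / L"
  by (simp add: inner_eq_frame metric_gradient_def om1_def om2_def om_def power2_eq_square)

lemma frame_norm_pos:
  assumes "x$1 \<noteq> 0" "L > 0" "n \<noteq> 0"
  shows "(pX n x)\<^sup>2 + (qX n x)\<^sup>2 + (rX n x)\<^sup>2 / L > 0"
proof -
  have "(pX n x, qX n x, rX n x) \<noteq> (0, 0, 0)"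
    using assms by (auto simp: pX_def qX_def rX_def vec_eq_iff forall_3)
  moreover have "(rX n x)\<^sup>2 / L \<ge> 0" "(rX n x)\<^sup>2 / L = 0 \<longleftrightarrow> rX n x = 0"
    using \<open>L > 0\<close> by auto
  ultimately show ?thesis
    by (smt (verit) power2_less_eq_zero_iff zero_le_power2)
qed

lemma tproj_eq:
  assumes x: "x$1 \<noteq> 0" and L: "L > 0"
    and m: "\<And>z. gL L x m z = n \<bullet> z" and nm: "n \<bullet> m \<noteq> 0"
  shows "tproj L n x w = w - (n \<bullet> w / (n \<bullet> m)) *\<^sub>R m"
  unfolding tproj_def
proof (rule the_equality)
  let ?P = "w - (n \<bullet> w / (n \<bullet> m)) *\<^sub>R m"
  have tangent: "n \<bullet> ?P = 0"
    using nm by (simp add: inner_diff_right)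
  have normal: "gL L x (w - ?P) z = 0" if "n \<bullet> z = 0" for z
    using that by (simp add: gL_scaleR_left m)
  show "n \<bullet> ?P = 0 \<and> (\<forall>z. n \<bullet> z = 0 \<longrightarrow> gL L x (w - ?P) z = 0)"
    using tangent normal by blast
  fix P assume P: "n \<bullet> P = 0 \<and> (\<forall>z. n \<bullet> z = 0 \<longrightarrow> gL L x (w - P) z = 0)"
  have "n \<bullet> (P - ?P) = 0"
    using P tangent by (simp add: inner_diff_right)
  then have "gL L x (w - ?P) (P - ?P) - gL L x (w - P) (P - ?P) = 0"
    using P normal by simp
  then have "gL L x (P - ?P) (P - ?P) = 0"
    by (simp add: gL_diff_left)
  then show "P = ?P"
    using gL_self_eq_0_iff[OF x L] by simp
qed

(* The squared geodesic curvature in frame components: (c1, c2, c3) and (a1, a2, a3) are the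
   (om1, om2, om)-components of gamma' and of its covariant acceleration, (p, q, r) those of the
   Euclidean gradient n, and p^2 + q^2 + r^2 / L is the squared g_L-length of the normal. *)
definition curv_sq ::
    "real \<Rightarrow> real \<Rightarrow> real \<Rightarrow> real \<Rightarrow> real \<Rightarrow> real \<Rightarrow> real \<Rightarrow> real \<Rightarrow> real \<Rightarrow> real \<Rightarrow> real" where
  "curv_sq L p q r c1 c2 c3 a1 a2 a3 =
     (a1\<^sup>2 + a2\<^sup>2 + L * a3\<^sup>2 - (p * a1 + q * a2 + r * a3)\<^sup>2 / (p\<^sup>2 + q\<^sup>2 + r\<^sup>2 / L))
       / (c1\<^sup>2 + c2\<^sup>2 + L * c3\<^sup>2)\<^sup>2
     - (a1 * c1 + a2 * c2 + L * a3 * c3)\<^sup>2 / (c1\<^sup>2 + c2\<^sup>2 + L * c3\<^sup>2) ^ 3"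

lemma geod_curv_eq_curv_sq:
  fixes x n v a :: "real^3"
  assumes x: "x$1 \<noteq> 0" and L: "L > 0" and n: "n \<noteq> 0" and tangent: "n \<bullet> v = 0"
  defines "N \<equiv> cov_acc L x v a"
  shows "geod_curv L n x v a = sqrt (curv_sq L (pX n x) (qX n x) (rX n x)
     (om1 x v) (om2 x v) (om x v) (om1 x N) (om2 x N) (om x N))"
proof -
  define m where "m = metric_gradient L n x"
  define D where "D = n \<bullet> m"
  have gm: "gL L x m z = n \<bullet> z" "gL L x z m = n \<bullet> z" for z
    using gL_metric_gradient[OF x] L gL_commute unfolding m_def by auto
  have D: "D = (pX n x)\<^sup>2 + (qX n x)\<^sup>2 + (rX n x)\<^sup>2 / L" "D > 0"
    unfolding D_def m_def using inner_metric_gradient[OF x] frame_norm_pos[OF x L n] by auto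
  have proj: "tproj L n x N = N - (n \<bullet> N / D) *\<^sub>R m"
    unfolding D_def using tproj_eq[OF x L gm(1)] D by (simp add: D_def)
  have NN: "gL L x (tproj L n x N) (tproj L n x N) = gL L x N N - (n \<bullet> N)\<^sup>2 / D"
  proof -
    define c where "c = n \<bullet> N / D"
    have "gL L x (N - c *\<^sub>R m) (N - c *\<^sub>R m) = gL L x N N - 2 * c * (n \<bullet> N) + c\<^sup>2 * D"
      by (simp add: gL_diff_left gL_diff_right gL_scaleR_left gL_scaleR_right gm D_def
          algebra_simps power2_eq_square)
    also have "\<dots> = gL L x N N - (n \<bullet> N)\<^sup>2 / D"
      using D(2) by (simp add: c_def field_simps power2_eq_square)
    finally show ?thesis
      unfolding proj c_def .
  qed
  have Nv: "gL L x (tproj L n x N) v = gL L x N v"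
    unfolding proj by (simp add: gL_diff_left gL_scaleR_left gm tangent)
  have sq: "sqrt (gL L x v v) ^ 2 = gL L x v v"
    using gL_self_nonneg[of L x v] L by simp
  have "sqrt y ^ 4 = (sqrt y ^ 2)\<^sup>2" "sqrt y ^ 6 = (sqrt y ^ 2) ^ 3" for y
    by (simp_all flip: power_mult)
  then have v4: "sqrt (gL L x v v) ^ 4 = (gL L x v v)\<^sup>2"
    and v6: "sqrt (gL L x v v) ^ 6 = (gL L x v v) ^ 3"
    by (simp_all only: sq)
  have gL_frame: "gL L x w w = (om1 x w)\<^sup>2 + (om2 x w)\<^sup>2 + L * (om x w)\<^sup>2"
    "gL L x N v = om1 x N * om1 x v + om2 x N * om2 x v + L * om x N * om x v" for w
    by (simp_all add: gL_def power2_eq_square)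
  have "geod_curv L n x v a =
      sqrt ((gL L x N N - (n \<bullet> N)\<^sup>2 / D) / (gL L x v v)\<^sup>2 - (gL L x N v)\<^sup>2 / (gL L x v v) ^ 3)"
    unfolding geod_curv_def Let_def N_def[symmetric] NN Nv v4 v6 ..
  then show ?thesis
    unfolding curv_sq_def D(1) inner_eq_frame[OF x] gL_frame .
qed

lemma tendsto_at_top_via_inverse:
  fixes f g :: "real \<Rightarrow> real"
  assumes "isCont f 0" and "\<forall>\<^sub>F L in at_top. g L = f (inverse L)"
  shows "(g \<longlongrightarrow> f 0) at_top"
proof (rule Lim_transform_eventually)
  show "((\<lambda>L. f (inverse L)) \<longlongrightarrow> f 0) at_top"
    using isCont_tendsto_compose[OF assms(1) tendsto_inverse_0_at_top[OF filterlim_ident]] .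
  show "\<forall>\<^sub>F L in at_top. f (inverse L) = g L"
    using assms(2) by (simp add: eq_commute)
qed

lemma scaled_quotient_eq:
  fixes L P N D V G :: real
  assumes "L \<noteq> 0"
  shows "(L\<^sup>2 * P - (L * N)\<^sup>2 / D) / (L * V)\<^sup>2 - (L * G)\<^sup>2 / (L * V) ^ 3
    = (P - N\<^sup>2 / D) / V\<^sup>2 - inverse L * G\<^sup>2 / V ^ 3"
  using assms by (cases "V = 0") (simp_all add: field_simps power2_eq_square power3_eq_cube)

lemma curv_sq_tendsto_nonhorizontal:
  fixes p q r c1 c2 c3 e1 e2 e3 :: real
  assumes c3: "c3 \<noteq> 0" and pq: "p\<^sup>2 + q\<^sup>2 > 0"
  shows "((\<lambda>L. curv_sq L p q r c1 c2 c3 (e1 + L * (c2 + c3) * c3) (e2 - L * c1 * c3) e3)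
    \<longlongrightarrow> (p * c1 + q * (c2 + c3))\<^sup>2 / ((p\<^sup>2 + q\<^sup>2) * c3\<^sup>2)) at_top"
proof -
  define g1 where "g1 = (c2 + c3) * c3"
  define g2 where "g2 = - c1 * c3"
  define f where "f s =
      ((s * e1 + g1)\<^sup>2 + (s * e2 + g2)\<^sup>2 + s * e3\<^sup>2
        - (p * (s * e1 + g1) + q * (s * e2 + g2) + r * (s * e3))\<^sup>2 / (p\<^sup>2 + q\<^sup>2 + r\<^sup>2 * s))
        / (s * (c1\<^sup>2 + c2\<^sup>2) + c3\<^sup>2)\<^sup>2
      - s * ((s * e1 + g1) * c1 + (s * e2 + g2) * c2 + e3 * c3)\<^sup>2 / (s * (c1\<^sup>2 + c2\<^sup>2) + c3\<^sup>2) ^ 3"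
    for s
  have rescaled:
    "curv_sq L p q r c1 c2 c3 (e1 + L * (c2 + c3) * c3) (e2 - L * c1 * c3) e3 = f (inverse L)"
    if L: "L > 0" for L
  proof -
    let ?s = "inverse L"
    have "e1 + L * (c2 + c3) * c3 = L * (?s * e1 + g1)" "e2 - L * c1 * c3 = L * (?s * e2 + g2)"
      "c1\<^sup>2 + c2\<^sup>2 + L * c3\<^sup>2 = L * (?s * (c1\<^sup>2 + c2\<^sup>2) + c3\<^sup>2)" "r\<^sup>2 / L = r\<^sup>2 * ?s"
      using L by (simp_all add: g1_def g2_def field_simps)
    moreover have "(L * \<alpha>)\<^sup>2 + (L * \<beta>)\<^sup>2 + L * e3\<^sup>2 = L\<^sup>2 * (\<alpha>\<^sup>2 + \<beta>\<^sup>2 + ?s * e3\<^sup>2)"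
      "p * (L * \<alpha>) + q * (L * \<beta>) + r * e3 = L * (p * \<alpha> + q * \<beta> + r * (?s * e3))"
      "L * \<alpha> * c1 + L * \<beta> * c2 + L * e3 * c3 = L * (\<alpha> * c1 + \<beta> * c2 + e3 * c3)" for \<alpha> \<beta>
      using L by (simp_all add: field_simps power2_eq_square)
    ultimately show ?thesis
      using L by (simp add: curv_sq_def scaled_quotient_eq f_def)
  qed
  have ev: "\<forall>\<^sub>F L in at_top.
      curv_sq L p q r c1 c2 c3 (e1 + L * (c2 + c3) * c3) (e2 - L * c1 * c3) e3 = f (inverse L)"
    using rescaled by (intro eventually_at_top_linorderI[of 1]) auto
  have cont: "isCont f 0"
    unfolding f_def using c3 pq by (intro continuous_intros) auto
  have f0: "f 0 = (p * c1 + q * (c2 + c3))\<^sup>2 / ((p\<^sup>2 + q\<^sup>2) * c3\<^sup>2)"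
  proof -
    \<comment> \<open>Lagrange's identity for the vectors (g1, g2) and (p, q)\<close>
    have lagrange: "(g1\<^sup>2 + g2\<^sup>2) * (p\<^sup>2 + q\<^sup>2) - (p * g1 + q * g2)\<^sup>2 = c3\<^sup>2 * (p * c1 + q * (c2 + c3))\<^sup>2"
      unfolding g1_def g2_def by algebra
    have "f 0 = (g1\<^sup>2 + g2\<^sup>2 - (p * g1 + q * g2)\<^sup>2 / (p\<^sup>2 + q\<^sup>2)) / (c3\<^sup>2)\<^sup>2"
      by (simp add: f_def)
    also have "\<dots> = ((g1\<^sup>2 + g2\<^sup>2) * (p\<^sup>2 + q\<^sup>2) - (p * g1 + q * g2)\<^sup>2) / ((p\<^sup>2 + q\<^sup>2) * (c3\<^sup>2)\<^sup>2)"
      using pq c3 by (simp add: divide_simps) (auto simp: algebra_simps)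
    also have "\<dots> = (p * c1 + q * (c2 + c3))\<^sup>2 / ((p\<^sup>2 + q\<^sup>2) * c3\<^sup>2)"
      unfolding lagrange using c3 by (simp add: power2_eq_square)
    finally show ?thesis .
  qed
  show ?thesis
    using tendsto_at_top_via_inverse[OF cont ev] unfolding f0 .
qed

lemma curv_sq_horizontal:
  "curv_sq L p q r c1 c2 0 e1 e2 e3 =
     (e1\<^sup>2 + e2\<^sup>2 + L * e3\<^sup>2 - (p * e1 + q * e2 + r * e3)\<^sup>2 / (p\<^sup>2 + q\<^sup>2 + r\<^sup>2 * inverse L))
       / (c1\<^sup>2 + c2\<^sup>2)\<^sup>2
     - (e1 * c1 + e2 * c2)\<^sup>2 / (c1\<^sup>2 + c2\<^sup>2) ^ 3"
  by (simp add: curv_sq_def divide_inverse)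

lemma curv_sq_tendsto_horizontal:
  fixes p q r c1 c2 e1 e2 :: real
  assumes tangent: "p * c1 + q * c2 = 0" and pq: "p\<^sup>2 + q\<^sup>2 > 0" and c: "c1\<^sup>2 + c2\<^sup>2 > 0"
  shows "((\<lambda>L. curv_sq L p q r c1 c2 0 e1 e2 0) \<longlongrightarrow> 0) at_top"
proof -
  define W where "W = c1\<^sup>2 + c2\<^sup>2"
  have W: "W \<noteq> 0"
    using c W_def by linarith
  define f where "f s = (e1\<^sup>2 + e2\<^sup>2 - (p * e1 + q * e2)\<^sup>2 / (p\<^sup>2 + q\<^sup>2 + r\<^sup>2 * s)) / W\<^sup>2
      - (e1 * c1 + e2 * c2)\<^sup>2 / W ^ 3" for s
  have ev: "\<forall>\<^sub>F L in at_top. curv_sq L p q r c1 c2 0 e1 e2 0 = f (inverse L)"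
    by (simp add: curv_sq_horizontal f_def W_def)
  have cont: "isCont f 0"
    unfolding f_def using pq W by (intro continuous_intros) auto
  have P: "p\<^sup>2 + q\<^sup>2 \<noteq> 0"
    using pq by linarith
  \<comment> \<open>(c1, c2) is a multiple of (- q, p), and Lagrange's identity applies to (e1, e2) and (p, q)\<close>
  have "(p\<^sup>2 + q\<^sup>2) * (((e1\<^sup>2 + e2\<^sup>2) * (p\<^sup>2 + q\<^sup>2) - (p * e1 + q * e2)\<^sup>2) * W
      - (e1 * c1 + e2 * c2)\<^sup>2 * (p\<^sup>2 + q\<^sup>2)) = 0"
    using tangent unfolding W_def by algebra
  then have "((e1\<^sup>2 + e2\<^sup>2) * (p\<^sup>2 + q\<^sup>2) - (p * e1 + q * e2)\<^sup>2) * W = (e1 * c1 + e2 * c2)\<^sup>2 * (p\<^sup>2 + q\<^sup>2)"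
    using P by (metis mult_eq_0_iff eq_iff_diff_eq_0)
  then have "e1\<^sup>2 + e2\<^sup>2 - (p * e1 + q * e2)\<^sup>2 / (p\<^sup>2 + q\<^sup>2) = (e1 * c1 + e2 * c2)\<^sup>2 / W"
    using P W by (simp add: field_simps)
  then have f0: "f 0 = 0"
    using W by (simp add: f_def power3_eq_cube power2_eq_square)
  show ?thesis
    using tendsto_at_top_via_inverse[OF cont ev] by (simp add: f0)
qed

lemma curv_sq_over_weight_tendsto_horizontal:
  fixes p q r c1 c2 e1 e2 e3 :: real
  assumes pq: "p\<^sup>2 + q\<^sup>2 > 0" and c: "c1\<^sup>2 + c2\<^sup>2 > 0"
  shows "((\<lambda>L. curv_sq L p q r c1 c2 0 e1 e2 e3 / L) \<longlongrightarrow> e3\<^sup>2 / (c1\<^sup>2 + c2\<^sup>2)\<^sup>2) at_top"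
proof -
  define W where "W = c1\<^sup>2 + c2\<^sup>2"
  have W: "W \<noteq> 0"
    using c W_def by linarith
  define f where "f s = (s * (e1\<^sup>2 + e2\<^sup>2) + e3\<^sup>2
      - s * ((p * e1 + q * e2 + r * e3)\<^sup>2 / (p\<^sup>2 + q\<^sup>2 + r\<^sup>2 * s))) / W\<^sup>2
      - s * ((e1 * c1 + e2 * c2)\<^sup>2 / W ^ 3)" for s
  have divide_weight: "((E + L * e - X) / V - Y) / L = (inverse L * E + e - inverse L * X) / V - inverse L * Y"
    if "L \<noteq> 0" for E e X V Y L :: real
    using that by (cases "V = 0") (simp_all add: field_simps)
  have "curv_sq L p q r c1 c2 0 e1 e2 e3 / L = f (inverse L)" if "L > 0" for L
    using that by (simp add: curv_sq_horizontal f_def W_def divide_weight)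
  then have ev: "\<forall>\<^sub>F L in at_top. curv_sq L p q r c1 c2 0 e1 e2 e3 / L = f (inverse L)"
    by (intro eventually_at_top_linorderI[of 1]) auto
  have cont: "isCont f 0"
    unfolding f_def using pq W by (intro continuous_intros) auto
  show ?thesis
    using tendsto_at_top_via_inverse[OF cont ev] by (simp add: f_def W_def)
qed

lemma eventually_geod_curv_eq_curv_sq:
  assumes x: "x$1 \<noteq> 0" and n: "n \<noteq> 0" and tangent: "n \<bullet> v = 0"
  shows "\<forall>\<^sub>F L in at_top. geod_curv L n x v a = sqrt (curv_sq L (pX n x) (qX n x) (rX n x)
    (om1 x v) (om2 x v) (om x v)
    (om1 x a - (om1 x v)\<^sup>2 + L * (om2 x v + om x v) * om x v)
    (om2 x a - L * om1 x v * om x v) (om_rate x v a - om1 x v * om x v))"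
  using eventually_gt_at_top[of 0]
  by (rule eventually_mono) (simp add: geod_curv_eq_curv_sq[OF x _ n tangent] frame_cov_acc[OF x])

lemma lX_neq_0_iff: "lX n x \<noteq> 0 \<longleftrightarrow> (pX n x)\<^sup>2 + (qX n x)\<^sup>2 > 0"
  by (simp add: lX_def add_pos_nonneg order_less_le)

lemma lX_neq_0_imp_neq_0: "lX n x \<noteq> 0 \<Longrightarrow> n \<noteq> 0"
  by (auto simp: lX_def pX_def qX_def)

lemma geod_curv_tendsto_nonhorizontal:
  assumes x: "x$1 \<noteq> 0" and l: "lX n x \<noteq> 0" and tangent: "n \<bullet> v = 0" and om: "om x v \<noteq> 0"
  shows "((\<lambda>L. geod_curv L n x v a)
    \<longlongrightarrow> \<bar>pbar n x * v$1 + qbar n x * v$2\<bar> / (\<bar>x$1\<bar> * \<bar>om x v\<bar>)) at_top"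
proof -
  define p q where "p = pX n x" and "q = qX n x"
  have pq: "p\<^sup>2 + q\<^sup>2 > 0"
    using l lX_neq_0_iff p_def q_def by simp
  note n = lX_neq_0_imp_neq_0[OF l]
  have "p * om1 x v + q * (om2 x v + om x v) = (p * v$1 + q * v$2) / x$1"
    using x by (simp add: om1_def om2_def om_def field_simps)
  then have "sqrt ((p * om1 x v + q * (om2 x v + om x v))\<^sup>2 / ((p\<^sup>2 + q\<^sup>2) * (om x v)\<^sup>2))
      = \<bar>p * v$1 + q * v$2\<bar> / (\<bar>x$1\<bar> * (sqrt (p\<^sup>2 + q\<^sup>2) * \<bar>om x v\<bar>))"
    by (simp add: real_sqrt_divide real_sqrt_mult power_divide)
  also have "\<dots> = \<bar>(p * v$1 + q * v$2) / sqrt (p\<^sup>2 + q\<^sup>2)\<bar> / (\<bar>x$1\<bar> * \<bar>om x v\<bar>)"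
    using pq by (simp add: abs_divide)
  also have "(p * v$1 + q * v$2) / sqrt (p\<^sup>2 + q\<^sup>2) = pbar n x * v$1 + qbar n x * v$2"
    by (simp add: pbar_def qbar_def lX_def p_def q_def add_divide_distrib)
  finally have limit: "sqrt ((p * om1 x v + q * (om2 x v + om x v))\<^sup>2 / ((p\<^sup>2 + q\<^sup>2) * (om x v)\<^sup>2))
      = \<bar>pbar n x * v$1 + qbar n x * v$2\<bar> / (\<bar>x$1\<bar> * \<bar>om x v\<bar>)" .
  have "((\<lambda>L. geod_curv L n x v a) \<longlongrightarrow>
      sqrt ((p * om1 x v + q * (om2 x v + om x v))\<^sup>2 / ((p\<^sup>2 + q\<^sup>2) * (om x v)\<^sup>2))) at_top"
    unfolding tendsto_cong[OF eventually_geod_curv_eq_curv_sq[OF x n tangent]]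
      p_def[symmetric] q_def[symmetric]
    by (rule tendsto_real_sqrt[OF curv_sq_tendsto_nonhorizontal[OF om pq]])
  then show ?thesis
    unfolding limit .
qed

lemma horizontal_frame:
  assumes x: "x$1 \<noteq> 0" and v: "v \<noteq> 0" and tangent: "n \<bullet> v = 0" and om: "om x v = 0"
  shows "pX n x * om1 x v + qX n x * om2 x v = 0" and "(om1 x v)\<^sup>2 + (om2 x v)\<^sup>2 > 0"
proof -
  show "pX n x * om1 x v + qX n x * om2 x v = 0"
    using tangent om by (simp add: inner_eq_frame[OF x])
  have "om1 x v \<noteq> 0 \<or> om2 x v \<noteq> 0"
    using x v om by (auto simp: om1_def om2_def om_def vec_eq_iff forall_3)
  then show "(om1 x v)\<^sup>2 + (om2 x v)\<^sup>2 > 0"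
    by (auto simp: add_pos_nonneg add_nonneg_pos)
qed

lemma eventually_geod_curv_eq_curv_sq_horizontal:
  assumes x: "x$1 \<noteq> 0" and n: "n \<noteq> 0" and tangent: "n \<bullet> v = 0" and om: "om x v = 0"
  shows "\<forall>\<^sub>F L in at_top. geod_curv L n x v a = sqrt (curv_sq L (pX n x) (qX n x) (rX n x)
    (om1 x v) (om2 x v) 0 (om1 x a - (om1 x v)\<^sup>2) (om2 x a) (om_rate x v a))"
  using eventually_geod_curv_eq_curv_sq[OF x n tangent, of a] by (simp add: om)

lemma geod_curv_tendsto_horizontal:
  assumes x: "x$1 \<noteq> 0" and l: "lX n x \<noteq> 0" and v: "v \<noteq> 0" and tangent: "n \<bullet> v = 0"
    and om: "om x v = 0" and om_rate: "om_rate x v a = 0"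
  shows "((\<lambda>L. geod_curv L n x v a) \<longlongrightarrow> 0) at_top"
proof -
  note n = lX_neq_0_imp_neq_0[OF l]
  have "((\<lambda>L. geod_curv L n x v a) \<longlongrightarrow> sqrt 0) at_top"
    unfolding tendsto_cong[OF eventually_geod_curv_eq_curv_sq_horizontal[OF x n tangent om]] om_rate
    using horizontal_frame[OF x v tangent om] l unfolding lX_neq_0_iff
    by (intro tendsto_real_sqrt curv_sq_tendsto_horizontal)
  then show ?thesis
    by simp
qed

lemma geod_curv_over_sqrt_tendsto_horizontal:
  assumes x: "x$1 \<noteq> 0" and l: "lX n x \<noteq> 0" and v: "v \<noteq> 0" and tangent: "n \<bullet> v = 0"
    and om: "om x v = 0"
  shows "((\<lambda>L. geod_curv L n x v a / sqrt L)
    \<longlongrightarrow> \<bar>om_rate x v a\<bar> / (qbar n x * (v$1 / x$1) - pbar n x * v$3)\<^sup>2) at_top"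
proof -
  define p q c1 c2 where "p = pX n x" and "q = qX n x" and "c1 = om1 x v" and "c2 = om2 x v"
  note n = lX_neq_0_imp_neq_0[OF l]
  have pq: "p\<^sup>2 + q\<^sup>2 > 0"
    using l lX_neq_0_iff p_def q_def by simp
  have horizontal: "p * c1 + q * c2 = 0" "c1\<^sup>2 + c2\<^sup>2 > 0"
    using horizontal_frame[OF x v tangent om] p_def q_def c1_def c2_def by simp_all
  have "(q * c1 - p * c2)\<^sup>2 = (p\<^sup>2 + q\<^sup>2) * (c1\<^sup>2 + c2\<^sup>2)"
    using horizontal(1) by algebra
  moreover have "qbar n x * (v$1 / x$1) - pbar n x * v$3 = (q * c1 - p * c2) / sqrt (p\<^sup>2 + q\<^sup>2)"
    by (simp add: pbar_def qbar_def lX_def p_def q_def c1_def c2_def om1_def om2_def diff_divide_distrib)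
  ultimately have weight: "(qbar n x * (v$1 / x$1) - pbar n x * v$3)\<^sup>2 = c1\<^sup>2 + c2\<^sup>2"
    using pq by (auto simp: power_divide)
  have ev: "\<forall>\<^sub>F L in at_top. geod_curv L n x v a / sqrt L
      = sqrt (curv_sq L p q (rX n x) c1 c2 0 (om1 x a - c1\<^sup>2) (om2 x a) (om_rate x v a) / L)"
    using eventually_geod_curv_eq_curv_sq_horizontal[OF x n tangent om, of a]
    by (rule eventually_mono) (simp add: p_def q_def c1_def c2_def real_sqrt_divide)
  have lim: "((\<lambda>L. sqrt (curv_sq L p q (rX n x) c1 c2 0 (om1 x a - c1\<^sup>2) (om2 x a) (om_rate x v a) / L))
      \<longlongrightarrow> sqrt ((om_rate x v a)\<^sup>2 / (c1\<^sup>2 + c2\<^sup>2)\<^sup>2)) at_top"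
    by (rule tendsto_real_sqrt[OF curv_sq_over_weight_tendsto_horizontal[OF pq horizontal(2)]])
  have "sqrt ((om_rate x v a)\<^sup>2 / (c1\<^sup>2 + c2\<^sup>2)\<^sup>2) = \<bar>om_rate x v a\<bar> / (c1\<^sup>2 + c2\<^sup>2)"
    using horizontal(2) by (simp add: real_sqrt_divide)
  then show ?thesis
    using lim unfolding weight tendsto_cong[OF ev] by simp
qed

lemma inner_gradient_tangent_eq_0:
  fixes u :: "'a::real_inner \<Rightarrow> real" and \<gamma> :: "real \<Rightarrow> 'a"
  assumes ab: "a < b" and t: "t \<in> {a..b}"
    and u: "(u has_derivative (\<lambda>h. g \<bullet> h)) (at (\<gamma> t))"
    and \<gamma>: "(\<gamma> has_vector_derivative v) (at t within {a..b})"
    and level: "\<forall>s\<in>{a..b}. u (\<gamma> s) = 0"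
  shows "g \<bullet> v = 0"
proof -
  have "((u \<circ> \<gamma>) has_derivative (\<lambda>h. g \<bullet> (h *\<^sub>R v))) (at t within {a..b})"
    using diff_chain_within[OF \<gamma>[unfolded has_vector_derivative_def]
        has_derivative_at_withinI[OF u]] by (simp add: o_def)
  then have "((u \<circ> \<gamma>) has_vector_derivative g \<bullet> v) (at t within {a..b})"
    by (simp add: has_vector_derivative_def inner_scaleR_right)
  moreover have "((u \<circ> \<gamma>) has_vector_derivative 0) (at t within {a..b})"
    by (rule has_vector_derivative_transform[OF t _ has_vector_derivative_const]) (use level in auto)
  ultimately show ?thesis
    using vector_derivative_within_closed_interval[OF ab t] by metis
qed

lemma has_real_derivative_vec_nth:
  "(f has_vector_derivative f') F \<Longrightarrow> ((\<lambda>s. f s $ i) has_real_derivative f' $ i) F"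
  unfolding has_real_derivative_iff_has_vector_derivative
  by (rule bounded_linear.has_vector_derivative[OF bounded_linear_vec_nth])

lemma om_has_real_derivative_along:
  assumes \<gamma>: "(\<gamma> has_vector_derivative \<gamma>' t) (at t within S)"
    and \<gamma>': "(\<gamma>' has_vector_derivative a) (at t within S)"
    and x: "\<gamma> t $ 1 \<noteq> 0"
  shows "((\<lambda>s. om (\<gamma> s) (\<gamma>' s)) has_real_derivative om_rate (\<gamma> t) (\<gamma>' t) a) (at t within S)"
proof -
  have "((\<lambda>s. \<gamma>' s $ 2 / \<gamma> s $ 1 - \<gamma>' s $ 3) has_real_derivative
      (a$2 * \<gamma> t $ 1 - \<gamma>' t $ 2 * \<gamma>' t $ 1) / (\<gamma> t $ 1 * \<gamma> t $ 1) - a$3) (at t within S)"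
    using x by (intro DERIV_diff DERIV_divide has_real_derivative_vec_nth \<gamma> \<gamma>')
  moreover have "(a$2 * \<gamma> t $ 1 - \<gamma>' t $ 2 * \<gamma>' t $ 1) / (\<gamma> t $ 1 * \<gamma> t $ 1) - a$3
      = om_rate (\<gamma> t) (\<gamma>' t) a"
    using x by (simp add: om_rate_def om_def om1_def field_simps)
  ultimately show ?thesis
    by (simp add: om_def)
qed

theorem lemma3p3:
  fixes u :: "real^3 \<Rightarrow> real" and gradu :: "real^3 \<Rightarrow> real^3" and H :: "real^3 \<Rightarrow> real^3^3"
    and \<gamma> \<gamma>' \<gamma>'' :: "real \<Rightarrow> real^3" and a b t :: real
  assumes u_deriv: "\<forall>x\<in>Gset. (u has_derivative (\<lambda>h. gradu x \<bullet> h)) (at x)"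
    and grad_deriv: "\<forall>x\<in>Gset. (gradu has_derivative (\<lambda>h. H x *v h)) (at x)"
    and H_cont: "continuous_on Gset H"
    and Sigma_compact: "compact {x\<in>Gset. u x = 0}"
    and Sigma_regular: "\<forall>x\<in>Gset. u x = 0 \<longrightarrow> gradu x \<noteq> 0"
    and ab: "a < b"
    and gamma_deriv: "\<forall>s\<in>{a..b}. (\<gamma> has_vector_derivative \<gamma>' s) (at s within {a..b})"
    and gamma'_deriv: "\<forall>s\<in>{a..b}. (\<gamma>' has_vector_derivative \<gamma>'' s) (at s within {a..b})"
    and gamma''_cont: "continuous_on {a..b} \<gamma>''"
    and gamma_regular: "\<forall>s\<in>{a..b}. \<gamma>' s \<noteq> 0"
    and gamma_in_Sigma: "\<forall>s\<in>{a..b}. \<gamma> s \<in> Gset \<and> u (\<gamma> s) = 0"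
    and t_in: "t \<in> {a..b}"
    and noncharacteristic: "lX (gradu (\<gamma> t)) (\<gamma> t) \<noteq> 0"
  shows
    "(om (\<gamma> t) (\<gamma>' t) \<noteq> 0 \<longrightarrow>
       ((\<lambda>L. geod_curv L (gradu (\<gamma> t)) (\<gamma> t) (\<gamma>' t) (\<gamma>'' t)) \<longlongrightarrow>
          \<bar>pbar (gradu (\<gamma> t)) (\<gamma> t) * \<gamma>' t $ 1 + qbar (gradu (\<gamma> t)) (\<gamma> t) * \<gamma>' t $ 2\<bar>
            / (\<bar>\<gamma> t $ 1\<bar> * \<bar>om (\<gamma> t) (\<gamma>' t)\<bar>)) at_top)
   \<and> (om (\<gamma> t) (\<gamma>' t) = 0 \<and>
        vector_derivative (\<lambda>s. om (\<gamma> s) (\<gamma>' s)) (at t within {a..b}) = 0 \<longrightarrow>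
       ((\<lambda>L. geod_curv L (gradu (\<gamma> t)) (\<gamma> t) (\<gamma>' t) (\<gamma>'' t)) \<longlongrightarrow> 0) at_top)
   \<and> (om (\<gamma> t) (\<gamma>' t) = 0 \<and>
        vector_derivative (\<lambda>s. om (\<gamma> s) (\<gamma>' s)) (at t within {a..b}) \<noteq> 0 \<longrightarrow>
       ((\<lambda>L. geod_curv L (gradu (\<gamma> t)) (\<gamma> t) (\<gamma>' t) (\<gamma>'' t) / sqrt L) \<longlongrightarrow>
          \<bar>vector_derivative (\<lambda>s. om (\<gamma> s) (\<gamma>' s)) (at t within {a..b})\<bar>
            / (qbar (gradu (\<gamma> t)) (\<gamma> t) * (\<gamma>' t $ 1 / \<gamma> t $ 1)
               - pbar (gradu (\<gamma> t)) (\<gamma> t) * \<gamma>' t $ 3)\<^sup>2) at_top)"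
proof -
  (* The limits only involve first-order data of u and second-order data of gamma at t. *)
  have "\<gamma> t \<in> Gset"
    using gamma_in_Sigma t_in by blast
  then have x: "\<gamma> t $ 1 \<noteq> 0"
    by (simp add: Gset_def)
  have tangent: "gradu (\<gamma> t) \<bullet> \<gamma>' t = 0"
    using ab t_in u_deriv gamma_in_Sigma gamma_deriv
    by (intro inner_gradient_tangent_eq_0[of a b t u _ \<gamma>]) auto
  have v: "\<gamma>' t \<noteq> 0"
    using gamma_regular t_in by auto
  have "vector_derivative (\<lambda>s. om (\<gamma> s) (\<gamma>' s)) (at t within {a..b}) = om_rate (\<gamma> t) (\<gamma>' t) (\<gamma>'' t)"
    using om_has_real_derivative_along[of \<gamma> \<gamma>' t "{a..b}" "\<gamma>'' t"] gamma_deriv gamma'_deriv t_in x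
    by (intro vector_derivative_within_closed_interval[OF ab t_in])
       (simp add: has_real_derivative_iff_has_vector_derivative)
  then show ?thesis
    using geod_curv_tendsto_nonhorizontal[OF x noncharacteristic tangent]
      geod_curv_tendsto_horizontal[OF x noncharacteristic v tangent]
      geod_curv_over_sqrt_tendsto_horizontal[OF x noncharacteristic v tangent]
    by simp
qed

end
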